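(* Let $\|\cdot\|$ be a norm on $\mathbb{R}^d$ and $T:\mathbb{R}^d\to\mathbb{R}^d$ a contraction with parameter $\gamma\in(0,1)$, i.e. $\|Tx-Ty\|\le\gamma\|x-y\|$, with unique fixed point $x^*$. Let $(\beta_n)_{n\ge1}\subseteq(0,1)$ be increasing, $x^0\in\mathbb{R}^d$, and $(x^n)$ generated by $x^n=(1-\beta_n)x^0+\beta_n(Tx^{n-1}+U_n)$, $n\ge1$, for arbitrary random vectors $U_n$. Then for every $n\ge1$, $$\|x^n-x^*\|\le\sum_{i=0}^n\gamma^{n-i}B_{i+1}^n\bigl((1-\beta_i)\|x^0-x^*\|+\beta_i\|U_i\|\bigr).$$
   Context: Notation: $B_i^n:=\prod_{j=i}^n\beta_j$ with $B_i^n=1$ if $i>n$; convention $\beta_0=0$ (so the $i=0$ term equals $\gamma^nB_1^n\|x^0-x^*\|$). *)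

theory Defs
  imports "HOL-Analysis.Analysis"
begin

definition is_norm :: "('a::real_vector \<Rightarrow> real) \<Rightarrow> bool" where
  "is_norm N \<longleftrightarrow> (\<forall>x. N x \<ge> 0) \<and> (\<forall>x. N x = 0 \<longleftrightarrow> x = 0)
     \<and> (\<forall>c x. N (c *\<^sub>R x) = \<bar>c\<bar> * N x) \<and> (\<forall>x y. N (x + y) \<le> N x + N y)"

definition Bprod :: "(nat \<Rightarrow> real) \<Rightarrow> nat \<Rightarrow> nat \<Rightarrow> real" where
  "Bprod \<beta> i n = (\<Prod>j=i..n. \<beta> j)"

end

theory Submission
  imports Defs
begin

(* Each iterate is a convex combination of the anchor x_0 and a perturbed contraction step,
   so the error e_k = N (x_k - x* ) satisfies the linear recursive inequality
   e_k <= gamma beta_k e_(k-1) + (1 - beta_k) e_0 + beta_k N (U_k);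
   unrolling it gives the bound. *)

lemma Bprod_Suc: "i \<le> Suc n \<Longrightarrow> Bprod a i (Suc n) = Bprod a i n * a (Suc n)"
  unfolding Bprod_def by (simp add: prod.nat_ivl_Suc')

lemma Bprod_empty: "n < i \<Longrightarrow> Bprod a i n = 1"
  by (simp add: Bprod_def)

lemma Bprod_scale: "Bprod (\<lambda>j. c * a j) i n = c ^ (Suc n - i) * Bprod a i n"
  by (simp add: Bprod_def prod.distrib)

lemma linear_recurrence_bound:
  fixes e a c :: "nat \<Rightarrow> real"
  assumes rec: "\<And>m. e (Suc m) \<le> a (Suc m) * e m + c (Suc m)"
    and nonneg: "\<And>m. 0 \<le> a (Suc m)"
  shows "e n \<le> Bprod a 1 n * e 0 + (\<Sum>i=1..n. Bprod a (i + 1) n * c i)"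
proof (induction n)
  case 0
  show ?case by (simp add: Bprod_def)
next
  case (Suc n)
  have sum_Suc: "(\<Sum>i=1..Suc n. Bprod a (i + 1) (Suc n) * c i)
      = a (Suc n) * (\<Sum>i=1..n. Bprod a (i + 1) n * c i) + c (Suc n)"
  proof -
    have "(\<Sum>i=1..n. Bprod a (i + 1) (Suc n) * c i) = a (Suc n) * (\<Sum>i=1..n. Bprod a (i + 1) n * c i)"
      unfolding sum_distrib_left by (rule sum.cong) (simp_all add: Bprod_Suc mult_ac)
    then show ?thesis
      by (simp add: Bprod_empty)
  qed
  have "e (Suc n) \<le> a (Suc n) * e n + c (Suc n)"
    by (rule rec)
  also have "\<dots> \<le> a (Suc n) * (Bprod a 1 n * e 0 + (\<Sum>i=1..n. Bprod a (i + 1) n * c i)) + c (Suc n)"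
    using Suc.IH nonneg by (simp add: mult_left_mono)
  also have "\<dots> = Bprod a 1 (Suc n) * e 0 + (\<Sum>i=1..Suc n. Bprod a (i + 1) (Suc n) * c i)"
    unfolding sum_Suc by (simp add: Bprod_Suc algebra_simps)
  finally show ?case .
qed

lemma anchored_step_error:
  fixes N :: "'a::real_vector \<Rightarrow> real"
  assumes "is_norm N"
    and contraction: "\<forall>y z. N (T y - T z) \<le> \<gamma> * N (y - z)"
    and fixpoint: "T xstar = xstar"
    and "0 \<le> b" "b \<le> 1"
  shows "N ((1 - b) *\<^sub>R x0 + b *\<^sub>R (T x + u) - xstar)
    \<le> b * \<gamma> * N (x - xstar) + ((1 - b) * N (x0 - xstar) + b * N u)"
proof -
  have triangle: "\<And>v w. N (v + w) \<le> N v + N w"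
    and scale: "\<And>t v. N (t *\<^sub>R v) = \<bar>t\<bar> * N v"
    using \<open>is_norm N\<close> unfolding is_norm_def by auto
  have "(1 - b) *\<^sub>R x0 + b *\<^sub>R (T x + u) - xstar
      = (1 - b) *\<^sub>R (x0 - xstar) + (b *\<^sub>R (T x - T xstar) + b *\<^sub>R u)"
    using fixpoint by (simp add: algebra_simps)
  then have "N ((1 - b) *\<^sub>R x0 + b *\<^sub>R (T x + u) - xstar)
      \<le> N ((1 - b) *\<^sub>R (x0 - xstar)) + (N (b *\<^sub>R (T x - T xstar)) + N (b *\<^sub>R u))"
    by (metis triangle add_left_mono order_trans)
  also have "\<dots> = (1 - b) * N (x0 - xstar) + b * N (T x - T xstar) + b * N u"
    using \<open>0 \<le> b\<close> \<open>b \<le> 1\<close> by (simp add: scale)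
  also have "\<dots> \<le> (1 - b) * N (x0 - xstar) + b * (\<gamma> * N (x - xstar)) + b * N u"
    using \<open>0 \<le> b\<close> contraction by (simp add: mult_left_mono)
  finally show ?thesis by (simp add: algebra_simps)
qed

theorem proposition2:
  fixes N :: "real ^ 'd \<Rightarrow> real"
    and T :: "real ^ 'd \<Rightarrow> real ^ 'd"
    and \<gamma> :: real and xstar :: "real ^ 'd"
    and \<beta> :: "nat \<Rightarrow> real"
    and U x :: "nat \<Rightarrow> real ^ 'd"
    and n :: nat
  assumes "is_norm N"
    and "0 < \<gamma>" and "\<gamma> < 1"
    and "\<forall>y z. N (T y - T z) \<le> \<gamma> * N (y - z)"
    and "T xstar = xstar"
    and "\<forall>k\<ge>1. 0 < \<beta> k \<and> \<beta> k < 1"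
    and "\<forall>k\<ge>1. \<beta> k \<le> \<beta> (Suc k)"
    and "\<forall>k\<ge>1. x k = (1 - \<beta> k) *\<^sub>R x 0 + \<beta> k *\<^sub>R (T (x (k - 1)) + U k)"
    and "n \<ge> 1"
  shows "N (x n - xstar) \<le>
      \<gamma> ^ n * Bprod \<beta> 1 n * N (x 0 - xstar)
      + (\<Sum>i=1..n. \<gamma> ^ (n - i) * Bprod \<beta> (i + 1) n
           * ((1 - \<beta> i) * N (x 0 - xstar) + \<beta> i * N (U i)))"
proof -
  define c where "c k = (1 - \<beta> k) * N (x 0 - xstar) + \<beta> k * N (U k)" for k
  have "N (x (Suc m) - xstar) \<le> \<gamma> * \<beta> (Suc m) * N (x m - xstar) + c (Suc m)" for m
  proof -
    have "x (Suc m) = (1 - \<beta> (Suc m)) *\<^sub>R x 0 + \<beta> (Suc m) *\<^sub>R (T (x m) + U (Suc m))"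
      using assms(8) by simp
    moreover have "0 \<le> \<beta> (Suc m)" "\<beta> (Suc m) \<le> 1"
      using assms(6) by (auto intro: less_imp_le)
    ultimately show ?thesis
      using anchored_step_error[OF assms(1,4,5), of "\<beta> (Suc m)" "x 0" "x m" "U (Suc m)"]
      by (simp add: c_def mult_ac)
  qed
  moreover have "0 \<le> \<gamma> * \<beta> (Suc m)" for m
    using assms(2) assms(6)[rule_format, of "Suc m"] by simp
  ultimately have "N (x n - xstar) \<le> Bprod (\<lambda>k. \<gamma> * \<beta> k) 1 n * N (x 0 - xstar)
      + (\<Sum>i=1..n. Bprod (\<lambda>k. \<gamma> * \<beta> k) (i + 1) n * c i)"
    by (rule linear_recurrence_bound)
  then show ?thesis
    by (simp add: Bprod_scale c_def mult_ac)
qed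

end
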